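(* Let $\mathfrak{F}$ be an assignment to every finite-dimensional quantum system $A$ of a set $\mathfrak{F}(A)$ of density matrices on $A$ (the free states), such that the family of free states is closed under tensor products, partial traces, and permutations (swaps) of subsystems. Then the Choi-defined (CD) operations associated with $\mathfrak{F}$ form a resource theory — i.e., for all systems the identity channel, the swap channel, and the discarding channel (partial trace) are CD operations, and sequential and parallel compositions of CD operations are CD operations — if and only if for all systems $A$ and $B$: (1) the state $\frac{1}{d_A}\Phi_{AA'}$ belongs to $\mathfrak{F}(AA')$; and (2) whenever $\rho_A\in\mathfrak{F}(A)$ and $\mu_{BA'}\in\mathfrak{F}(BA')$ with $\mu_{BA'}$ the renormalized Choi matrix of a quantum channel (i.e. $\operatorname{tr}_B\mu_{BA'}=\frac{1}{d_A}\mathbb{1}_{A'}$), the state $d_A\,\mu_{B:A'}*\rho_A=d_A\operatorname{tr}_A[\mu_{BA}(\mathbb{1}_B\otimes\rho_A^{T})]$ belongs to $\mathfrak{F}(B)$.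
   Context: Systems are finite-dimensional Hilbert spaces; $d_A$ is the dimension of $A$ and $A'$ is a copy of $A$. Fix an orthonormal basis $\{|x\rangle_A\}$ of each system; the unnormalized Choi state is $\Phi_{AA'}=\sum_{x,y}|x\rangle\langle y|_A\otimes|x\rangle\langle y|_{A'}$. The Choi matrix of a channel $\mathcal{M}_{A\to B}$ is $M_{B:A'}=(\mathcal{M}_{A\to B}\otimes\mathcal{I}_{A'})(\Phi_{AA'})$ (output system first, input copy second), and its renormalized Choi matrix is $\mu_{B:A'}=\frac{1}{d_A}M_{B:A'}$, a state with $\operatorname{tr}_B\mu_{BA'}=\frac1{d_A}\mathbb{1}_{A'}$; conversely such a state determines the channel $\mathcal{M}_{A\to B}(\rho_A)=d_A\operatorname{tr}_A[\mu_{BA}(\mathbb{1}_B\otimes\rho_A^T)]$, with $T$ the transpose in the fixed basis. The link product is $N_{C:B'}*M_{B:A'}=\operatorname{tr}_{BB'}[(N_{C:B'}\otimes M_{B:A'})(\mathbb{1}_C\otimes\Phi_{B'B}\otimes\mathbb{1}_{A'})]$; for a state $\rho_A$ (viewed as Choi matrix of a preparation) $M_{B:A'}*\rho_A=\operatorname{tr}_A[M_{B:A}(\mathbb{1}_B\otimes\rho_A^T)]$. A channel $\mathcal{M}_{A\to B}$ is a Choi-defined (CD) operation associated with $\mathfrak{F}$ if its renormalized Choi matrix lies in $\mathfrak{F}(BA')$; states are regarded as channels from the trivial one-dimensional system, whose renormalized Choi matrix is the state itself. A Choi-defined resource theory (CDRT) is a resource theory whose free operations are exactly the CD operations associated with its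 free states. *)

theory Defs
  imports "Jordan_Normal_Form.Matrix" "Jordan_Normal_Form.Conjugate"
begin

text \<open>A (possibly composite) finite-dimensional quantum system is modelled as the list
 of dimensions of its elementary tensor factors; the composite system AB is the list
 concatenation A @ B, the trivial system is the empty list (dimension 1), and a copy A' of A
 is the same list A. Indices of a composite system are ordered lexicographically
 (Kronecker convention: index of (i,k) in AB is i * d_B + k).\<close>

type_synonym sys = "nat list"

definition is_sys :: "sys \<Rightarrow> bool" where
  "is_sys A \<longleftrightarrow> (\<forall>d\<in>set A. 0 < d)"

definition dim :: "sys \<Rightarrow> nat" where
  "dim A = prod_list A"

definition mtrace :: "complex mat \<Rightarrow> complex" where
  "mtrace X = (\<Sum>i<dim_row X. X $$ (i, i))"

definition psd :: "nat \<Rightarrow> complex mat \<Rightarrow> bool" where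
  "psd n X \<longleftrightarrow> X \<in> carrier_mat n n \<and>
     (\<forall>v\<in>carrier_vec n. Im (conjugate v \<bullet> (X *\<^sub>v v)) = 0 \<and> 0 \<le> Re (conjugate v \<bullet> (X *\<^sub>v v)))"

definition density :: "nat \<Rightarrow> complex mat \<Rightarrow> bool" where
  "density n X \<longleftrightarrow> psd n X \<and> mtrace X = 1"

definition kron :: "complex mat \<Rightarrow> complex mat \<Rightarrow> complex mat" where
  "kron X Y = mat (dim_row X * dim_row Y) (dim_col X * dim_col Y)
     (\<lambda>(i, j). X $$ (i div dim_row Y, j div dim_col Y) * Y $$ (i mod dim_row Y, j mod dim_col Y))"

definition ptrace_snd :: "nat \<Rightarrow> nat \<Rightarrow> complex mat \<Rightarrow> complex mat" where
  "ptrace_snd d1 d2 X = mat d1 d1 (\<lambda>(i, j). \<Sum>k<d2. X $$ (i * d2 + k, j * d2 + k))"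

definition ptrace_fst :: "nat \<Rightarrow> nat \<Rightarrow> complex mat \<Rightarrow> complex mat" where
  "ptrace_fst d1 d2 X = mat d2 d2 (\<lambda>(k, l). \<Sum>i<d1. X $$ (i * d2 + k, i * d2 + l))"

definition swap_mat :: "nat \<Rightarrow> nat \<Rightarrow> complex mat \<Rightarrow> complex mat" where
  "swap_mat d1 d2 X = mat (d2 * d1) (d2 * d1)
     (\<lambda>(r, s). X $$ ((r mod d1) * d2 + r div d1, (s mod d1) * d2 + s div d1))"

definition swap_idx :: "nat \<Rightarrow> nat \<Rightarrow> nat \<Rightarrow> nat \<Rightarrow> nat" where
  "swap_idx dB dC dD r =
     (let d = r mod dD; t = r div dD; b = t mod dB; t2 = t div dB; c = t2 mod dC; a = t2 div dC
      in ((a * dB + b) * dC + c) * dD + d)"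

definition swap_mid :: "nat \<Rightarrow> nat \<Rightarrow> nat \<Rightarrow> nat \<Rightarrow> complex mat \<Rightarrow> complex mat" where
  "swap_mid dA dB dC dD X = mat (dA * dC * dB * dD) (dA * dC * dB * dD)
     (\<lambda>(r, s). X $$ (swap_idx dB dC dD r, swap_idx dB dC dD s))"

definition munit :: "nat \<Rightarrow> nat \<Rightarrow> nat \<Rightarrow> complex mat" where
  "munit d i j = mat d d (\<lambda>(a, b). if a = i \<and> b = j then 1 else 0)"

definition Phi :: "nat \<Rightarrow> complex mat" where
  "Phi d = mat (d * d) (d * d)
     (\<lambda>(r, s). if r div d = r mod d \<and> s div d = s mod d then 1 else 0)"

text \<open>Maps are HOL functions on matrices; only their values on the relevant carrier matter.
 Parallel composition M (x) N of M : A1 -> B1 and N : A2 -> B2, defined by linear extension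
 on product matrix units.\<close>
definition par :: "nat \<Rightarrow> nat \<Rightarrow> nat \<Rightarrow> nat \<Rightarrow> (complex mat \<Rightarrow> complex mat)
    \<Rightarrow> (complex mat \<Rightarrow> complex mat) \<Rightarrow> complex mat \<Rightarrow> complex mat" where
  "par dA1 dA2 dB1 dB2 M N X = mat (dB1 * dB2) (dB1 * dB2) (\<lambda>(p, q).
     \<Sum>i<dA1. \<Sum>j<dA1. \<Sum>k<dA2. \<Sum>l<dA2.
        X $$ (i * dA2 + k, j * dA2 + l) *
        (M (munit dA1 i j)) $$ (p div dB2, q div dB2) *
        (N (munit dA2 k l)) $$ (p mod dB2, q mod dB2))"

definition lin_map :: "nat \<Rightarrow> nat \<Rightarrow> (complex mat \<Rightarrow> complex mat) \<Rightarrow> bool" where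
  "lin_map dA dB M \<longleftrightarrow>
     (\<forall>X\<in>carrier_mat dA dA. M X \<in> carrier_mat dB dB) \<and>
     (\<forall>X\<in>carrier_mat dA dA. \<forall>Y\<in>carrier_mat dA dA. M (X + Y) = M X + M Y) \<and>
     (\<forall>X\<in>carrier_mat dA dA. \<forall>c. M (c \<cdot>\<^sub>m X) = c \<cdot>\<^sub>m M X)"

definition channel :: "sys \<Rightarrow> sys \<Rightarrow> (complex mat \<Rightarrow> complex mat) \<Rightarrow> bool" where
  "channel A B M \<longleftrightarrow> lin_map (dim A) (dim B) M \<and>
     (\<forall>X\<in>carrier_mat (dim A) (dim A). mtrace (M X) = mtrace X) \<and>
     (\<forall>n X. psd (n * dim A) X \<longrightarrow> psd (n * dim B) (par n (dim A) n (dim B) (\<lambda>Y. Y) M X))"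

text \<open>Choi matrix M_{B:A'} = (M (x) id)(Phi_{AA'}), output system first.\<close>
definition choi :: "nat \<Rightarrow> nat \<Rightarrow> (complex mat \<Rightarrow> complex mat) \<Rightarrow> complex mat" where
  "choi dA dB M = mat (dB * dA) (dB * dA)
     (\<lambda>(r, s). (M (munit dA (r mod dA) (s mod dA))) $$ (r div dA, s div dA))"

definition rchoi :: "sys \<Rightarrow> sys \<Rightarrow> (complex mat \<Rightarrow> complex mat) \<Rightarrow> complex mat" where
  "rchoi A B M = (1 / of_nat (dim A)) \<cdot>\<^sub>m choi (dim A) (dim B) M"

type_synonym free_states = "sys \<Rightarrow> complex mat set"

definition CD_op :: "free_states \<Rightarrow> sys \<Rightarrow> sys \<Rightarrow> (complex mat \<Rightarrow> complex mat) \<Rightarrow> bool" where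
  "CD_op F A B M \<longleftrightarrow> channel A B M \<and> rchoi A B M \<in> F (B @ A)"

definition admissible_free_states :: "free_states \<Rightarrow> bool" where
  "admissible_free_states F \<longleftrightarrow>
     (\<forall>A. is_sys A \<longrightarrow> (\<forall>\<rho>\<in>F A. density (dim A) \<rho>)) \<and>
     (\<forall>A B. is_sys A \<longrightarrow> is_sys B \<longrightarrow> (\<forall>\<rho>\<in>F A. \<forall>\<sigma>\<in>F B. kron \<rho> \<sigma> \<in> F (A @ B))) \<and>
     (\<forall>A B. is_sys A \<longrightarrow> is_sys B \<longrightarrow> (\<forall>\<rho>\<in>F (A @ B).
        ptrace_snd (dim A) (dim B) \<rho> \<in> F A \<and> ptrace_fst (dim A) (dim B) \<rho> \<in> F B)) \<and>
     (\<forall>A B C D. is_sys A \<longrightarrow> is_sys B \<longrightarrow> is_sys C \<longrightarrow> is_sys D \<longrightarrow> (\<forall>\<rho>\<in>F (A @ B @ C @ D).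
        swap_mid (dim A) (dim B) (dim C) (dim D) \<rho> \<in> F (A @ C @ B @ D)))"

definition CD_resource_theory :: "free_states \<Rightarrow> bool" where
  "CD_resource_theory F \<longleftrightarrow>
     (\<forall>A. is_sys A \<longrightarrow> CD_op F A A (\<lambda>X. X)) \<and>
     (\<forall>A B. is_sys A \<longrightarrow> is_sys B \<longrightarrow> CD_op F (A @ B) (B @ A) (swap_mat (dim A) (dim B))) \<and>
     (\<forall>A B. is_sys A \<longrightarrow> is_sys B \<longrightarrow> CD_op F (A @ B) A (ptrace_snd (dim A) (dim B))) \<and>
     (\<forall>A B C M N. is_sys A \<longrightarrow> is_sys B \<longrightarrow> is_sys C \<longrightarrow>
        CD_op F A B M \<longrightarrow> CD_op F B C N \<longrightarrow> CD_op F A C (N \<circ> M)) \<and>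
     (\<forall>A1 A2 B1 B2 M N. is_sys A1 \<longrightarrow> is_sys A2 \<longrightarrow> is_sys B1 \<longrightarrow> is_sys B2 \<longrightarrow>
        CD_op F A1 B1 M \<longrightarrow> CD_op F A2 B2 N \<longrightarrow>
        CD_op F (A1 @ A2) (B1 @ B2) (par (dim A1) (dim A2) (dim B1) (dim B2) M N))"

end

(* Necessity: the identity channel has renormalized Choi matrix Phi/d_A, and d_A mu * rho is
   the Choi state of the composite of the preparation of rho with the channel whose Choi state
   is mu.  Sufficiency: the Choi states of the swap and of the discarding channel are obtained
   from Phi/d by permuting, tracing out and tensoring, and the Choi state of a parallel
   composition is a permuted tensor product of Choi states; the Choi state of N o M is
   (N (x) id_A)(mu_M), i.e. the link product of the free Choi state of the CD operation
   N (x) id_A with the free state mu_M, to which condition (2) applies.  That free Choi states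
   define completely positive maps follows from a Gram (Kraus) decomposition of positive
   semidefinite matrices. *)
theory Submission
  imports Defs
begin

abbreviation max_ent :: "nat \<Rightarrow> complex mat" where
  "max_ent d \<equiv> (1 / of_nat d) \<cdot>\<^sub>m Phi d"

abbreviation max_mixed :: "nat \<Rightarrow> complex mat" where
  "max_mixed d \<equiv> (1 / of_nat d) \<cdot>\<^sub>m 1\<^sub>m d"

lemma if_zero_mult: "(if P then x else 0) * y = (if P then x * y else (0::'a::mult_zero))"
  and mult_if_zero: "y * (if P then x else 0) = (if P then y * x else (0::'a::mult_zero))"
  and cnj_if_zero: "cnj (if P then z else 0) = (if P then cnj z else 0)"
  and if_conj_zero: "(if P \<and> Q then x else 0) = (if P then if Q then x else 0 else 0)"
  and sum_if_zero: "(\<Sum>s\<in>S. if P then f s else 0) = (if P then (\<Sum>s\<in>S. f s) else 0)"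
  by auto

lemmas if_zero_simps = if_zero_mult mult_if_zero cnj_if_zero if_conj_zero sum_if_zero

lemma mult_index_less: "i < m \<Longrightarrow> k < (n::nat) \<Longrightarrow> i * n + k < m * n"
proof -
  assume "i < m" "k < n"
  then have "i * n + k < (i + 1) * n" by simp
  also have "\<dots> \<le> m * n" using \<open>i < m\<close> by (intro mult_right_mono) auto
  finally show ?thesis .
qed

lemma mult_index_eq_iff [simp]:
  "i * n + k = j * n + l \<longleftrightarrow> i = j \<and> k = l" if "k < n" "l < (n::nat)"
proof
  assume "i * n + k = j * n + l"
  then have "(i * n + k) div n = (j * n + l) div n" "(i * n + k) mod n = (j * n + l) mod n"
    by simp_all
  with that show "i = j \<and> k = l" by simp
qed simp

lemma mult_index_cases:
  fixes r :: nat
  assumes "r < m * n"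
  obtains i k where "i < m" "k < n" "r = i * n + k"
proof (rule that[of "r div n" "r mod n"])
  have "0 < n" using assms by (cases n) auto
  then show "r div n < m" "r mod n < n" using assms by (auto simp: less_mult_imp_div_less)
qed simp

lemma sum_lessThan_mult:
  "(\<Sum>x<m * n. f x) = (\<Sum>i<m. \<Sum>k<n. f (i * n + k :: nat) :: 'a::comm_monoid_add)"
proof -
  have "(\<Sum>x<m * n. f x) = (\<Sum>i<m. \<Sum>x\<in>{i * n..<i * n + n}. f x)"
    using sum.nat_group[of f n m] by simp
  also have "\<dots> = (\<Sum>i<m. \<Sum>k<n. f (i * n + k))"
  proof (rule sum.cong[OF refl])
    fix i
    show "(\<Sum>x\<in>{i * n..<i * n + n}. f x) = (\<Sum>k<n. f (i * n + k))"
      using sum.shift_bounds_nat_ivl[of f 0 "i * n" n] by (simp add: atLeast0LessThan add.commute)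
  qed
  finally show ?thesis .
qed

lemma eq_mat_blockI:
  assumes "X \<in> carrier_mat (m * n) (m * n)" "Y \<in> carrier_mat (m * n) (m * n)"
    and "\<And>i j k l. i < m \<Longrightarrow> j < m \<Longrightarrow> k < n \<Longrightarrow> l < n \<Longrightarrow>
      X $$ (i * n + k, j * n + l) = Y $$ (i * n + k, j * n + l)"
  shows "X = Y"
proof (rule eq_matI)
  fix r s assume "r < dim_row Y" "s < dim_col Y"
  then have "r < m * n" "s < m * n" using assms(2) by auto
  then show "X $$ (r, s) = Y $$ (r, s)"
    by (elim mult_index_cases) (simp add: assms(3))
qed (use assms in auto)

lemma mult_entry:
  assumes "A \<in> carrier_mat n m" "B \<in> carrier_mat m k" "i < n" "j < k"
  shows "(A * B) $$ (i, j) = (\<Sum>z<m. A $$ (i, z) * B $$ (z, j))"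
  using assms by (simp add: scalar_prod_def atLeast0LessThan)

lemma kron_carrier:
  "X \<in> carrier_mat m m \<Longrightarrow> Y \<in> carrier_mat n n \<Longrightarrow> kron X Y \<in> carrier_mat (m * n) (m * n)"
  unfolding kron_def by simp

lemma kron_entry:
  assumes "X \<in> carrier_mat m m" "Y \<in> carrier_mat n n" "i < m" "j < m" "k < n" "l < n"
  shows "kron X Y $$ (i * n + k, j * n + l) = X $$ (i, j) * Y $$ (k, l)"
  using assms mult_index_less[of i m k n] mult_index_less[of j m l n] unfolding kron_def by simp

lemma swap_idx_eq:
  "b < dB \<Longrightarrow> c < dC \<Longrightarrow> d < dD \<Longrightarrow>
    swap_idx dB dC dD (((a * dC + c) * dB + b) * dD + d) = ((a * dB + b) * dC + c) * dD + d"
  unfolding swap_idx_def Let_def by simp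

lemma swap_mid_carrier: "swap_mid dA dB dC dD X \<in> carrier_mat (dA * dC * dB * dD) (dA * dC * dB * dD)"
  unfolding swap_mid_def by simp

lemma swap_mid_entry:
  "r < dA * dC * dB * dD \<Longrightarrow> s < dA * dC * dB * dD \<Longrightarrow>
    swap_mid dA dB dC dD X $$ (r, s) = X $$ (swap_idx dB dC dD r, swap_idx dB dC dD s)"
  unfolding swap_mid_def by simp

lemma munit_entry [simp]:
  "a < d \<Longrightarrow> b < d \<Longrightarrow> munit d i j $$ (a, b) = (if a = i \<and> b = j then 1 else 0)"
  unfolding munit_def by simp

lemma munit_carrier [simp]: "munit d i j \<in> carrier_mat d d"
  and munit_dims [simp]: "dim_row (munit d i j) = d" "dim_col (munit d i j) = d"
  unfolding munit_def by simp_all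

lemma mtrace_munit: "i < d \<Longrightarrow> j < d \<Longrightarrow> mtrace (munit d i j) = (if i = j then 1 else 0)"
  unfolding mtrace_def by (simp add: if_zero_simps)

lemma max_ent_carrier: "max_ent d \<in> carrier_mat (d * d) (d * d)"
  unfolding Phi_def by simp

lemma max_ent_entry:
  "i < d \<Longrightarrow> j < d \<Longrightarrow> k < d \<Longrightarrow> l < d \<Longrightarrow>
    max_ent d $$ (i * d + k, j * d + l) = (1 / of_nat d) * (if i = k \<and> j = l then 1 else 0)"
  using mult_index_less[of i d k d] mult_index_less[of j d l d] by (simp add: Phi_def)

lemma ptrace_snd_dims [simp]:
  "dim_row (ptrace_snd d1 d2 X) = d1" "dim_col (ptrace_snd d1 d2 X) = d1"
  unfolding ptrace_snd_def by simp_all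

lemma ptrace_fst_dims [simp]:
  "dim_row (ptrace_fst d1 d2 X) = d2" "dim_col (ptrace_fst d1 d2 X) = d2"
  unfolding ptrace_fst_def by simp_all

lemma par_dims [simp]:
  "dim_row (par a1 a2 b1 b2 M N X) = b1 * b2" "dim_col (par a1 a2 b1 b2 M N X) = b1 * b2"
  unfolding par_def by simp_all

section \<open>Positive semidefinite matrices\<close>

definition quad_form :: "nat \<Rightarrow> complex mat \<Rightarrow> (nat \<Rightarrow> complex) \<Rightarrow> complex" where
  "quad_form n X v = (\<Sum>r<n. \<Sum>s<n. cnj (v r) * X $$ (r, s) * v s)"

lemma quad_form_eq_scalar_prod:
  "X \<in> carrier_mat n n \<Longrightarrow> v \<in> carrier_vec n \<Longrightarrow>
    conjugate v \<bullet> (X *\<^sub>v v) = quad_form n X (\<lambda>i. v $ i)"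
  unfolding quad_form_def scalar_prod_def mult_mat_vec_def
  by (auto simp: sum_distrib_left mult.assoc atLeast0LessThan intro!: sum.cong)

lemma psd_iff_quad_form: "psd n X \<longleftrightarrow> X \<in> carrier_mat n n \<and> (\<forall>v. 0 \<le> quad_form n X v)"
proof
  assume psd: "psd n X"
  then have X: "X \<in> carrier_mat n n" unfolding psd_def by auto
  have "0 \<le> quad_form n X v" for v
  proof -
    have "quad_form n X v = quad_form n X (\<lambda>i. vec n v $ i)"
      unfolding quad_form_def by (auto intro!: sum.cong)
    also have "\<dots> = conjugate (vec n v) \<bullet> (X *\<^sub>v vec n v)"
      using quad_form_eq_scalar_prod[OF X, of "vec n v"] by auto
    finally show ?thesis using psd unfolding psd_def by (auto simp: less_eq_complex_def)
  qed
  with X show "X \<in> carrier_mat n n \<and> (\<forall>v. 0 \<le> quad_form n X v)" by blast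
next
  assume "X \<in> carrier_mat n n \<and> (\<forall>v. 0 \<le> quad_form n X v)"
  then show "psd n X" unfolding psd_def using quad_form_eq_scalar_prod[of X n]
    by (auto simp: less_eq_complex_def)
qed

lemma quad_form_single: "t < n \<Longrightarrow> quad_form n X (\<lambda>i. if i = t then a else 0) = cnj a * X $$ (t, t) * a"
  unfolding quad_form_def by (simp add: if_zero_simps)

lemma quad_form_pair:
  assumes "r < n" "t < n" "r \<noteq> t"
  shows "quad_form n X (\<lambda>i. if i = r then a else if i = t then b else 0) =
    cnj a * X $$ (r, r) * a + cnj a * X $$ (r, t) * b + cnj b * X $$ (t, r) * a + cnj b * X $$ (t, t) * b"
proof -
  have split: "(\<lambda>i. if i = r then a else if i = t then b else 0) =
      (\<lambda>i. (if i = r then a else 0) + (if i = t then b else 0))"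
    using assms by auto
  show ?thesis unfolding quad_form_def split using assms
    by (simp add: distrib_left distrib_right sum.distrib if_zero_simps)
qed

lemma quad_form_shift:
  assumes "t < n"
  shows "quad_form n X (\<lambda>i. v i + (if i = t then l else 0)) =
    quad_form n X v + l * (\<Sum>r<n. cnj (v r) * X $$ (r, t)) + cnj l * (\<Sum>s<n. X $$ (t, s) * v s)
      + cnj l * X $$ (t, t) * l"
  unfolding quad_form_def using assms
  by (simp add: distrib_left distrib_right sum.distrib if_zero_simps, simp add: sum_distrib_left mult_ac)

lemma psd_diag_nonneg:
  assumes "psd n X" "t < n"
  shows "0 \<le> X $$ (t, t)"
proof -
  have "0 \<le> quad_form n X (\<lambda>i. if i = t then 1 else 0)"
    using assms(1) unfolding psd_iff_quad_form by blast
  then show ?thesis using quad_form_single[OF assms(2), of X 1] by simp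
qed

lemma psd_hermitian:
  assumes psd: "psd n X" and r: "r < n" and s: "s < n"
  shows "X $$ (s, r) = cnj (X $$ (r, s))"
proof (cases "r = s")
  case True
  then show ?thesis using psd_diag_nonneg[OF psd r] by (auto simp: less_eq_complex_def complex_eq_iff)
next
  case False
  have "0 \<le> quad_form n X (\<lambda>i. if i = r then 1 else if i = s then 1 else 0)"
    and "0 \<le> quad_form n X (\<lambda>i. if i = r then 1 else if i = s then \<i> else 0)"
    using psd unfolding psd_iff_quad_form by auto
  then show ?thesis using psd_diag_nonneg[OF psd] r s unfolding quad_form_pair[OF r s False]
    by (simp add: less_eq_complex_def complex_eq_iff)
qed

lemma psd_zero_diag_imp_zero_col:
  assumes psd: "psd n X" and t: "t < n" and zero: "X $$ (t, t) = 0" and r: "r < n"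
  shows "X $$ (r, t) = 0"
proof (rule ccontr)
  assume c0: "X $$ (r, t) \<noteq> 0"
  then have rt: "r \<noteq> t" using zero by auto
  define c where "c = X $$ (r, t)"
  define nc where "nc = (Re c)\<^sup>2 + (Im c)\<^sup>2"
  have "nc > 0" using c0 unfolding nc_def c_def by (simp add: complex_eq_iff sum_power2_gt_zero_iff)
  define x where "x = (Re (X $$ (r, r)) + 1) / nc"
  \<comment> \<open>for this x the test vector e_r - x conj(c) e_t makes the quadratic form negative\<close>
  have "0 \<le> quad_form n X (\<lambda>i. if i = r then 1 else if i = t then - of_real x * cnj c else 0)"
    using psd unfolding psd_iff_quad_form by blast
  also have "\<dots> = X $$ (r, r) - 2 * of_real x * (c * cnj c)"
    using quad_form_pair[OF r t rt, of X 1 "- of_real x * cnj c"] psd_hermitian[OF psd r t] zero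
    by (simp add: c_def algebra_simps)
  finally have "0 \<le> Re (X $$ (r, r)) - 2 * x * nc"
    by (simp add: less_eq_complex_def nc_def power2_eq_square algebra_simps)
  moreover have "x * nc = Re (X $$ (r, r)) + 1" using \<open>nc > 0\<close> unfolding x_def by simp
  moreover have "0 \<le> Re (X $$ (r, r))" using psd_diag_nonneg[OF psd r] by (simp add: less_eq_complex_def)
  ultimately show False by linarith
qed

lemma psd_schur_complement:
  assumes psd: "psd n X" and t: "t < n" and nz: "X $$ (t, t) \<noteq> 0"
  shows "psd n (mat n n (\<lambda>(r, s). X $$ (r, s) - X $$ (r, t) * cnj (X $$ (s, t)) / X $$ (t, t)))"
  unfolding psd_iff_quad_form
proof (intro conjI allI)
  fix v
  define a where "a = X $$ (t, t)"
  have "cnj a = a" using psd_diag_nonneg[OF psd t]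
    unfolding a_def by (simp add: less_eq_complex_def complex_eq_iff)
  define c where "c = (\<Sum>r<n. cnj (v r) * X $$ (r, t))"
  have c': "(\<Sum>s<n. X $$ (t, s) * v s) = cnj c"
    unfolding c_def using psd_hermitian[OF psd t] by (auto intro!: sum.cong)
  have "quad_form n (mat n n (\<lambda>(r, s). X $$ (r, s) - X $$ (r, t) * cnj (X $$ (s, t)) / X $$ (t, t))) v
     = quad_form n X v - (\<Sum>r<n. \<Sum>s<n. cnj (v r) * X $$ (r, t) * (cnj (X $$ (s, t)) * v s)) / a"
    unfolding quad_form_def a_def by (simp add: algebra_simps sum_subtractf sum_divide_distrib)
  also have "(\<Sum>r<n. \<Sum>s<n. cnj (v r) * X $$ (r, t) * (cnj (X $$ (s, t)) * v s)) = c * cnj c"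
    unfolding c_def cnj_sum sum_product by (simp add: mult_ac)
  also have "quad_form n X v - c * cnj c / a = quad_form n X (\<lambda>i. v i + (if i = t then - cnj c / a else 0))"
    unfolding quad_form_shift[OF t] c' c_def[symmetric] a_def[symmetric]
    using nz \<open>cnj a = a\<close> by (simp add: a_def field_simps)
  finally show "0 \<le> quad_form n (mat n n (\<lambda>(r, s). X $$ (r, s) - X $$ (r, t) * cnj (X $$ (s, t)) / X $$ (t, t))) v"
    using psd unfolding psd_iff_quad_form by simp
qed simp

lemma psd_split_rank_one:
  assumes psd: "psd n X" and t: "t < n"
  obtains Y w where "psd n Y"
    and "\<And>r s. r < n \<Longrightarrow> s < n \<Longrightarrow> X $$ (r, s) = w r * cnj (w s) + Y $$ (r, s)"
    and "\<And>s. s < n \<Longrightarrow> Y $$ (t, s) = 0"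
    and "\<And>r s. r < n \<Longrightarrow> s < n \<Longrightarrow> (\<forall>s'<n. X $$ (r, s') = 0) \<Longrightarrow> Y $$ (r, s) = 0"
proof (cases "X $$ (t, t) = 0")
  case True
  have "X $$ (t, s) = 0" if "s < n" for s
    using psd_hermitian[OF psd that t] psd_zero_diag_imp_zero_col[OF psd t True that] by simp
  then show ?thesis by (intro that[of X "\<lambda>_. 0"] psd) simp_all
next
  case False
  define Y where "Y = mat n n (\<lambda>(r, s). X $$ (r, s) - X $$ (r, t) * cnj (X $$ (s, t)) / X $$ (t, t))"
  define a where "a = Re (X $$ (t, t))"
  have aX: "X $$ (t, t) = of_real a" using psd_diag_nonneg[OF psd t] unfolding a_def
    by (simp add: less_eq_complex_def complex_eq_iff)
  have "a > 0" using False aX psd_diag_nonneg[OF psd t] by (simp add: less_eq_complex_def)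
  then have sqrt_a: "of_real (sqrt a) * of_real (sqrt a) = (of_real a :: complex)"
    by (simp flip: of_real_mult)
  show ?thesis
  proof (rule that[of Y "\<lambda>r. X $$ (r, t) / of_real (sqrt a)"])
    show "psd n Y" unfolding Y_def by (rule psd_schur_complement[OF psd t False])
    fix r s assume "r < n" "s < n"
    have "X $$ (r, t) / of_real (sqrt a) * cnj (X $$ (s, t) / of_real (sqrt a))
        = X $$ (r, t) * cnj (X $$ (s, t)) / (of_real (sqrt a) * of_real (sqrt a))"
      by simp
    then show "X $$ (r, s) = X $$ (r, t) / of_real (sqrt a) * cnj (X $$ (s, t) / of_real (sqrt a)) + Y $$ (r, s)"
      using \<open>r < n\<close> \<open>s < n\<close> unfolding Y_def sqrt_a aX by simp
  next
    fix s assume "s < n"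
    then show "Y $$ (t, s) = 0" using psd_hermitian[OF psd \<open>s < n\<close> t] False t unfolding Y_def by simp
  next
    fix r s assume "r < n" "s < n" "\<forall>s'<n. X $$ (r, s') = 0"
    then show "Y $$ (r, s) = 0" using t unfolding Y_def by simp
  qed
qed

lemma psd_gram_decomposition_on:
  assumes "finite S" "S \<subseteq> {..<n}" "psd n X"
    and "\<And>r s. r < n \<Longrightarrow> s < n \<Longrightarrow> r \<notin> S \<Longrightarrow> X $$ (r, s) = 0"
  shows "\<exists>w. \<forall>r<n. \<forall>s<n. X $$ (r, s) = (\<Sum>m\<in>S. w m r * cnj (w m s))"
  using assms
proof (induction S arbitrary: X rule: finite_induct)
  case empty
  then show ?case by simp
next
  case (insert t S)
  then have t: "t < n" by auto
  obtain Y w0 where Y: "psd n Y"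
    and XY: "\<And>r s. r < n \<Longrightarrow> s < n \<Longrightarrow> X $$ (r, s) = w0 r * cnj (w0 s) + Y $$ (r, s)"
    and row_t: "\<And>s. s < n \<Longrightarrow> Y $$ (t, s) = 0"
    and rows: "\<And>r s. r < n \<Longrightarrow> s < n \<Longrightarrow> (\<forall>s'<n. X $$ (r, s') = 0) \<Longrightarrow> Y $$ (r, s) = 0"
    using psd_split_rank_one[OF insert.prems(2) t] by metis
  have supp: "Y $$ (r, s) = 0" if "r < n" "s < n" "r \<notin> S" for r s
  proof (cases "r = t")
    case False
    then have "\<forall>s'<n. X $$ (r, s') = 0" using that insert.prems(3) by simp
    then show ?thesis using rows that by blast
  qed (use row_t that in simp)
  obtain w where w: "\<forall>r<n. \<forall>s<n. Y $$ (r, s) = (\<Sum>m\<in>S. w m r * cnj (w m s))"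
    using insert.IH[OF _ Y supp] insert.prems(1) by blast
  have "X $$ (r, s) = (\<Sum>m\<in>insert t S. (w(t := w0)) m r * cnj ((w(t := w0)) m s))"
    if "r < n" "s < n" for r s
  proof -
    have "(\<Sum>m\<in>S. (w(t := w0)) m r * cnj ((w(t := w0)) m s)) = Y $$ (r, s)"
      using insert.hyps w that by (auto intro!: sum.cong)
    then show ?thesis using insert.hyps XY[OF that] by simp
  qed
  then show ?case by blast
qed

lemma psd_gram_decomposition:
  "psd n X \<Longrightarrow> \<exists>w. \<forall>r<n. \<forall>s<n. X $$ (r, s) = (\<Sum>m<n. w m r * cnj (w m s))"
  using psd_gram_decomposition_on[of "{..<n}" n X] by auto

lemma psd_smult:
  assumes "psd n X" "0 \<le> c"
  shows "psd n (of_real c \<cdot>\<^sub>m X)"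
proof -
  have X: "X \<in> carrier_mat n n" using assms unfolding psd_iff_quad_form by auto
  have "quad_form n (of_real c \<cdot>\<^sub>m X) v = of_real c * quad_form n X v" for v
    unfolding quad_form_def using X by (simp add: sum_distrib_left mult_ac)
  then show ?thesis using assms X unfolding psd_iff_quad_form by (auto simp: less_eq_complex_def)
qed

lemma quad_form_sum:
  "quad_form N (mat N N (\<lambda>(p, q). \<Sum>m<K. f m p q)) v = (\<Sum>m<K. quad_form N (mat N N (\<lambda>(p, q). f m p q)) v)"
proof -
  have "quad_form N (mat N N (\<lambda>(p, q). \<Sum>m<K. f m p q)) v = (\<Sum>p<N. \<Sum>q<N. \<Sum>m<K. cnj (v p) * f m p q * v q)"
    unfolding quad_form_def by (simp add: sum_distrib_left sum_distrib_right)
  also have "\<dots> = (\<Sum>p<N. \<Sum>m<K. \<Sum>q<N. cnj (v p) * f m p q * v q)"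
    by (rule sum.cong[OF refl], rule sum.swap)
  also have "\<dots> = (\<Sum>m<K. \<Sum>p<N. \<Sum>q<N. cnj (v p) * f m p q * v q)"
    by (rule sum.swap)
  finally show ?thesis unfolding quad_form_def by simp
qed

lemma quad_form_congruence:
  "quad_form n (mat n n (\<lambda>(p, q). \<Sum>x<N. \<Sum>y<N. cnj (T x p) * X $$ (x, y) * T y q)) v
    = quad_form N X (\<lambda>x. \<Sum>p<n. T x p * v p)"
proof -
  define G where "G = (\<lambda>(p::nat, q::nat) (x::nat, y::nat). cnj (v p) * cnj (T x p) * X $$ (x, y) * T y q * v q)"
  have "quad_form n (mat n n (\<lambda>(p, q). \<Sum>x<N. \<Sum>y<N. cnj (T x p) * X $$ (x, y) * T y q)) v
     = (\<Sum>p<n. \<Sum>q<n. \<Sum>x<N. \<Sum>y<N. G (p, q) (x, y))"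
    unfolding quad_form_def G_def by (simp add: sum_distrib_left sum_distrib_right mult_ac)
  also have "\<dots> = (\<Sum>pq\<in>{..<n} \<times> {..<n}. \<Sum>xy\<in>{..<N} \<times> {..<N}. G pq xy)"
    by (simp only: sum.cartesian_product')
  also have "\<dots> = (\<Sum>xy\<in>{..<N} \<times> {..<N}. \<Sum>pq\<in>{..<n} \<times> {..<n}. G pq xy)"
    by (rule sum.swap)
  also have "\<dots> = (\<Sum>x<N. \<Sum>y<N. \<Sum>p<n. \<Sum>q<n. G (p, q) (x, y))"
    by (simp only: sum.cartesian_product')
  also have "\<dots> = quad_form N X (\<lambda>x. \<Sum>p<n. T x p * v p)"
    unfolding quad_form_def G_def cnj_sum by (simp add: sum_distrib_left sum_distrib_right mult_ac)
  finally show ?thesis .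
qed

lemma dim_pos: "is_sys A \<Longrightarrow> 0 < dim A"
  by (induction A) (auto simp: is_sys_def dim_def)

lemma is_sys_append [simp]: "is_sys (A @ B) \<longleftrightarrow> is_sys A \<and> is_sys B"
  by (auto simp: is_sys_def)

lemma is_sys_Nil [simp]: "is_sys []"
  by (simp add: is_sys_def)

lemma dim_append [simp]: "dim (A @ B) = dim A * dim B"
  by (simp add: dim_def)

lemma dim_Nil [simp]: "dim [] = 1"
  by (simp add: dim_def)

definition choi_map :: "nat \<Rightarrow> nat \<Rightarrow> complex mat \<Rightarrow> complex mat \<Rightarrow> complex mat" where
  "choi_map dA dB C X = mat dB dB (\<lambda>(b, b'). \<Sum>k<dA. \<Sum>l<dA. X $$ (k, l) * C $$ (b * dA + k, b' * dA + l))"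

lemma choi_map_carrier [simp]: "choi_map dA dB C X \<in> carrier_mat dB dB"
  and choi_map_dims [simp]: "dim_row (choi_map dA dB C X) = dB" "dim_col (choi_map dA dB C X) = dB"
  unfolding choi_map_def by simp_all

lemma choi_map_munit:
  "k < dA \<Longrightarrow> l < dA \<Longrightarrow>
    choi_map dA dB C (munit dA k l) = mat dB dB (\<lambda>(b, b'). C $$ (b * dA + k, b' * dA + l))"
  unfolding choi_map_def by (auto simp: if_zero_simps intro!: eq_matI)

lemma choi_map_add:
  "X \<in> carrier_mat dA dA \<Longrightarrow> Y \<in> carrier_mat dA dA \<Longrightarrow>
    choi_map dA dB C (X + Y) = choi_map dA dB C X + choi_map dA dB C Y"
  unfolding choi_map_def by (auto simp: sum.distrib distrib_right intro!: eq_matI)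

lemma choi_map_smult:
  "X \<in> carrier_mat dA dA \<Longrightarrow> choi_map dA dB C (c \<cdot>\<^sub>m X) = c \<cdot>\<^sub>m choi_map dA dB C X"
  unfolding choi_map_def by (auto simp: sum_distrib_left mult.assoc intro!: eq_matI)

lemma choi_map_smult_choi:
  assumes "C \<in> carrier_mat (dB * dA) (dB * dA)"
  shows "choi_map dA dB (c \<cdot>\<^sub>m C) X = c \<cdot>\<^sub>m choi_map dA dB C X"
  unfolding choi_map_def using assms mult_index_less[of _ dB _ dA]
  by (auto simp: sum_distrib_left mult_ac intro!: eq_matI sum.cong)

lemma lin_map_choi_map: "lin_map dA dB (choi_map dA dB C)"
  unfolding lin_map_def using choi_map_add choi_map_smult by auto

lemma choi_carrier: "choi dA dB M \<in> carrier_mat (dB * dA) (dB * dA)"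
  and choi_dims [simp]: "dim_row (choi dA dB M) = dB * dA" "dim_col (choi dA dB M) = dB * dA"
  unfolding choi_def by simp_all

lemma choi_choi_map:
  assumes "C \<in> carrier_mat (dB * dA) (dB * dA)" "0 < dA"
  shows "choi dA dB (choi_map dA dB C) = C"
proof (rule eq_matI)
  fix r s assume "r < dim_row C" "s < dim_col C"
  then have r: "r < dB * dA" and s: "s < dB * dA" using assms by auto
  have "r div dA < dB" "s div dA < dB" using r s by (auto simp: less_mult_imp_div_less)
  then show "choi dA dB (choi_map dA dB C) $$ (r, s) = C $$ (r, s)"
    using r s assms(2) unfolding choi_def by (simp add: choi_map_munit)
qed (use assms in \<open>auto simp: choi_def\<close>)

lemma lin_map_carrier: "lin_map dA dB M \<Longrightarrow> X \<in> carrier_mat dA dA \<Longrightarrow> M X \<in> carrier_mat dB dB"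
  unfolding lin_map_def by blast

lemma choi_map_choi_munit:
  assumes lin: "lin_map dA dB M" and "k < dA" "l < dA"
  shows "choi_map dA dB (choi dA dB M) (munit dA k l) = M (munit dA k l)"
  using lin_map_carrier[OF lin munit_carrier, of k l] assms(2,3)
  unfolding choi_map_munit[OF assms(2,3)] by (auto simp: choi_def mult_index_less intro!: eq_matI)

lemma choi_map_choi:
  assumes lin: "lin_map dA dB M" and X: "X \<in> carrier_mat dA dA"
  shows "choi_map dA dB (choi dA dB M) X = M X"
proof -
  define X_on where "X_on S = mat dA dA (\<lambda>(k, l). if (k, l) \<in> S then X $$ (k, l) else 0)" for S
  have add: "\<And>Y Z. Y \<in> carrier_mat dA dA \<Longrightarrow> Z \<in> carrier_mat dA dA \<Longrightarrow> M (Y + Z) = M Y + M Z"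
    and smult: "\<And>Y c. Y \<in> carrier_mat dA dA \<Longrightarrow> M (c \<cdot>\<^sub>m Y) = c \<cdot>\<^sub>m M Y"
    using lin unfolding lin_map_def by auto
  have "choi_map dA dB (choi dA dB M) (X_on S) = M (X_on S)"
    if "finite S" "S \<subseteq> {..<dA} \<times> {..<dA}" for S
    using that
  proof (induction S rule: finite_induct)
    case empty
    have "X_on {} = 0 \<cdot>\<^sub>m X" unfolding X_on_def using X by (auto intro!: eq_matI)
    then show ?case
      using X lin_map_carrier[OF lin X] smult[OF X, of 0] choi_map_smult[OF X, where c=0]
      by (auto intro!: eq_matI)
  next
    case (insert p S)
    obtain k l where p: "p = (k, l)" by force
    have kl: "k < dA" "l < dA" using insert p by auto
    have split: "X_on (insert p S) = X_on S + X $$ (k, l) \<cdot>\<^sub>m munit dA k l"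
      unfolding X_on_def p using insert p by (auto intro!: eq_matI)
    have c1: "X_on S \<in> carrier_mat dA dA" unfolding X_on_def by simp
    have c2: "X $$ (k, l) \<cdot>\<^sub>m munit dA k l \<in> carrier_mat dA dA" by simp
    show ?case
      unfolding split add[OF c1 c2] choi_map_add[OF c1 c2] smult[OF munit_carrier] choi_map_smult[OF munit_carrier]
      using insert choi_map_choi_munit[OF lin kl] by simp
  qed
  moreover have "X_on ({..<dA} \<times> {..<dA}) = X" unfolding X_on_def using X by (auto intro!: eq_matI)
  ultimately show ?thesis by (metis finite_SigmaI finite_lessThan order_refl)
qed

lemma trace_choi_map:
  assumes marg: "ptrace_fst dB dA C = 1\<^sub>m dA" and X: "X \<in> carrier_mat dA dA"
  shows "mtrace (choi_map dA dB C X) = mtrace X"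
proof -
  have "mtrace (choi_map dA dB C X) = (\<Sum>b<dB. \<Sum>k<dA. \<Sum>l<dA. X $$ (k, l) * C $$ (b * dA + k, b * dA + l))"
    unfolding mtrace_def choi_map_def by simp
  also have "\<dots> = (\<Sum>k<dA. \<Sum>l<dA. X $$ (k, l) * (\<Sum>b<dB. C $$ (b * dA + k, b * dA + l)))"
    by (simp add: sum_distrib_left sum.swap[of _ "{..<dB}"])
  also have "\<dots> = (\<Sum>k<dA. \<Sum>l<dA. X $$ (k, l) * 1\<^sub>m dA $$ (k, l))"
    by (intro sum.cong refl, subst marg[symmetric], simp add: ptrace_fst_def)
  also have "\<dots> = mtrace X" unfolding mtrace_def using X by (simp add: if_distrib cong: if_cong)
  finally show ?thesis .
qed

lemma ptrace_snd_link_eq_choi_map: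
  assumes C: "C \<in> carrier_mat (dB * dA) (dB * dA)" and X: "X \<in> carrier_mat dA dA"
  shows "ptrace_snd dB dA (C * kron (1\<^sub>m dB) (transpose_mat X)) = choi_map dA dB C X"
proof (rule eq_matI)
  fix b b' assume "b < dim_row (choi_map dA dB C X)" "b' < dim_col (choi_map dA dB C X)"
  then have b: "b < dB" "b' < dB" by auto
  have K: "kron (1\<^sub>m dB) (transpose_mat X) \<in> carrier_mat (dB * dA) (dB * dA)"
    using kron_carrier[of "1\<^sub>m dB" dB "transpose_mat X" dA] X by simp
  have "ptrace_snd dB dA (C * kron (1\<^sub>m dB) (transpose_mat X)) $$ (b, b') =
      (\<Sum>k<dA. (C * kron (1\<^sub>m dB) (transpose_mat X)) $$ (b * dA + k, b' * dA + k))"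
    unfolding ptrace_snd_def using b by simp
  also have "\<dots> = (\<Sum>k<dA. \<Sum>c<dB. \<Sum>l<dA.
      C $$ (b * dA + k, c * dA + l) * kron (1\<^sub>m dB) (transpose_mat X) $$ (c * dA + l, b' * dA + k))"
    by (intro sum.cong refl, subst mult_entry[OF C K]) (use b in \<open>auto simp: mult_index_less sum_lessThan_mult\<close>)
  also have "\<dots> = (\<Sum>k<dA. \<Sum>c<dB. \<Sum>l<dA. C $$ (b * dA + k, c * dA + l) * ((if c = b' then 1 else 0) * X $$ (k, l)))"
    by (intro sum.cong refl, subst kron_entry) (use b X in auto)
  also have "\<dots> = choi_map dA dB C X $$ (b, b')"
    using b unfolding choi_map_def by (simp add: if_zero_simps mult_ac)
  finally show "ptrace_snd dB dA (C * kron (1\<^sub>m dB) (transpose_mat X)) $$ (b, b') = choi_map dA dB C X $$ (b, b')" .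
qed simp_all

lemma rchoi_carrier: "rchoi A B M \<in> carrier_mat (dim B * dim A) (dim B * dim A)"
  unfolding rchoi_def choi_def by simp

lemma choi_entry:
  assumes "b < dB" "b' < dB" "a < dA" "a' < dA"
  shows "choi dA dB M $$ (b * dA + a, b' * dA + a') = M (munit dA a a') $$ (b, b')"
  using assms mult_index_less[of b dB a dA] mult_index_less[of b' dB a' dA]
  unfolding choi_def by simp

lemma rchoi_entry:
  assumes "b < dim B" "b' < dim B" "a < dim A" "a' < dim A"
  shows "rchoi A B M $$ (b * dim A + a, b' * dim A + a') = (1 / of_nat (dim A)) * M (munit (dim A) a a') $$ (b, b')"
  using assms mult_index_less[of b "dim B" a "dim A"] mult_index_less[of b' "dim B" a' "dim A"]
  unfolding rchoi_def by (simp add: choi_entry choi_carrier)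

lemma rchoi_Nil:
  assumes "M (munit 1 0 0) \<in> carrier_mat (dim B) (dim B)"
  shows "rchoi [] B M = M (munit 1 0 0)"
  using assms unfolding rchoi_def choi_def by (auto intro!: eq_matI)

lemma link_rchoi:
  assumes A: "is_sys A" and lin: "lin_map (dim A) (dim B) M" and X: "X \<in> carrier_mat (dim A) (dim A)"
  shows "of_nat (dim A) \<cdot>\<^sub>m ptrace_snd (dim B) (dim A) (rchoi A B M * kron (1\<^sub>m (dim B)) (transpose_mat X)) = M X"
proof -
  have "ptrace_snd (dim B) (dim A) (rchoi A B M * kron (1\<^sub>m (dim B)) (transpose_mat X))
      = choi_map (dim A) (dim B) (rchoi A B M) X"
    by (rule ptrace_snd_link_eq_choi_map[OF rchoi_carrier X])
  also have "\<dots> = (1 / of_nat (dim A)) \<cdot>\<^sub>m M X"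
    unfolding rchoi_def choi_map_smult_choi[OF choi_carrier] choi_map_choi[OF lin X] ..
  finally show ?thesis using dim_pos[OF A] by (auto intro!: eq_matI)
qed

lemma ptrace_fst_rchoi:
  assumes lin: "lin_map (dim A) (dim B) M"
    and tp: "\<And>X. X \<in> carrier_mat (dim A) (dim A) \<Longrightarrow> mtrace (M X) = mtrace X"
  shows "ptrace_fst (dim B) (dim A) (rchoi A B M) = max_mixed (dim A)"
proof (rule eq_matI)
  fix a a' assume "a < dim_row (max_mixed (dim A))" "a' < dim_col (max_mixed (dim A))"
  then have a: "a < dim A" "a' < dim A" by auto
  have "ptrace_fst (dim B) (dim A) (rchoi A B M) $$ (a, a') = (\<Sum>b<dim B. rchoi A B M $$ (b * dim A + a, b * dim A + a'))"
    unfolding ptrace_fst_def using a by simp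
  also have "\<dots> = (1 / of_nat (dim A)) * mtrace (M (munit (dim A) a a'))"
    using a lin_map_carrier[OF lin munit_carrier, of a a']
    by (simp add: rchoi_entry mtrace_def sum_distrib_left)
  also have "\<dots> = max_mixed (dim A) $$ (a, a')"
    using tp[OF munit_carrier] mtrace_munit a by simp
  finally show "ptrace_fst (dim B) (dim A) (rchoi A B M) $$ (a, a') = max_mixed (dim A) $$ (a, a')" .
qed auto

section \<open>Complete positivity from a positive Choi matrix\<close>

lemma par_entry:
  "p < dB1 * dB2 \<Longrightarrow> q < dB1 * dB2 \<Longrightarrow> par dA1 dA2 dB1 dB2 M N X $$ (p, q) =
    (\<Sum>i<dA1. \<Sum>j<dA1. \<Sum>k<dA2. \<Sum>l<dA2. X $$ (i * dA2 + k, j * dA2 + l) *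
       M (munit dA1 i j) $$ (p div dB2, q div dB2) * N (munit dA2 k l) $$ (p mod dB2, q mod dB2))"
  unfolding par_def by simp

lemma par_id_entry:
  assumes p: "p < n * dB" and q: "q < n * dB" and dB: "0 < dB"
  shows "par n dA n dB (\<lambda>Y. Y) M X $$ (p, q) =
    (\<Sum>k<dA. \<Sum>l<dA. X $$ ((p div dB) * dA + k, (q div dB) * dA + l) * M (munit dA k l) $$ (p mod dB, q mod dB))"
proof -
  have "p div dB < n" "q div dB < n" using p q dB by (auto simp: less_mult_imp_div_less)
  then show ?thesis unfolding par_entry[OF p q] by (simp add: if_zero_simps)
qed

text \<open>If the Choi matrix is \<open>\<Sum>\<^sub>m w\<^sub>m w\<^sub>m\<^sup>*\<close>, each \<open>w\<^sub>m\<close> read as a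
  \<open>dB \<times> dA\<close> matrix \<open>K\<^sub>m\<close> is a Kraus operator of the map; \<open>kraus_adj dA dB w m\<close>
  is the matrix of \<open>(1 \<otimes> K\<^sub>m)\<^sup>*\<close>.\<close>
definition kraus_adj :: "nat \<Rightarrow> nat \<Rightarrow> (nat \<Rightarrow> nat \<Rightarrow> complex) \<Rightarrow> nat \<Rightarrow> nat \<Rightarrow> nat \<Rightarrow> complex" where
  "kraus_adj dA dB w m x p = (if x div dA = p div dB then cnj (w m ((p mod dB) * dA + x mod dA)) else 0)"

lemma par_id_choi_map_kraus:
  assumes w: "\<forall>r<dB * dA. \<forall>s<dB * dA. C $$ (r, s) = (\<Sum>m<dB * dA. w m r * cnj (w m s))"
    and dA: "0 < dA" and dB: "0 < dB" and p: "p < n * dB" and q: "q < n * dB"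
  shows "par n dA n dB (\<lambda>Y. Y) (choi_map dA dB C) X $$ (p, q) =
    (\<Sum>m<dB * dA. \<Sum>x<n * dA. \<Sum>y<n * dA. cnj (kraus_adj dA dB w m x p) * X $$ (x, y) * kraus_adj dA dB w m y q)"
proof -
  let ?T = "kraus_adj dA dB w"
  let ?i = "p div dB" and ?j = "q div dB"
  have ij: "?i < n" "?j < n" using p q dB by (auto simp: less_mult_imp_div_less)
  have pm: "p mod dB < dB" "q mod dB < dB" using dB by auto
  have "par n dA n dB (\<lambda>Y. Y) (choi_map dA dB C) X $$ (p, q)
      = (\<Sum>k<dA. \<Sum>l<dA. X $$ (?i * dA + k, ?j * dA + l) * C $$ ((p mod dB) * dA + k, (q mod dB) * dA + l))"
    unfolding par_id_entry[OF p q dB] using pm by (simp add: choi_map_munit)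
  also have "\<dots> = (\<Sum>k<dA. \<Sum>l<dA. \<Sum>m<dB * dA.
      cnj (?T m (?i * dA + k) p) * X $$ (?i * dA + k, ?j * dA + l) * ?T m (?j * dA + l) q)"
  proof (intro sum.cong refl)
    fix k l assume "k \<in> {..<dA}" "l \<in> {..<dA}"
    then show "X $$ (?i * dA + k, ?j * dA + l) * C $$ ((p mod dB) * dA + k, (q mod dB) * dA + l) =
      (\<Sum>m<dB * dA. cnj (?T m (?i * dA + k) p) * X $$ (?i * dA + k, ?j * dA + l) * ?T m (?j * dA + l) q)"
      using w pm mult_index_less[of "p mod dB" dB k dA] mult_index_less[of "q mod dB" dB l dA]
      unfolding kraus_adj_def by (simp add: sum_distrib_left mult_ac)
  qed
  also have "\<dots> = (\<Sum>m<dB * dA. \<Sum>k<dA. \<Sum>l<dA.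
      cnj (?T m (?i * dA + k) p) * X $$ (?i * dA + k, ?j * dA + l) * ?T m (?j * dA + l) q)"
    by (simp add: sum.swap[of _ "{..<dB * dA}"])
  also have "\<dots> = (\<Sum>m<dB * dA. \<Sum>x<n * dA. \<Sum>y<n * dA. cnj (?T m x p) * X $$ (x, y) * ?T m y q)"
  proof (rule sum.cong[OF refl])
    fix m
    have "(\<Sum>x<n * dA. \<Sum>y<n * dA. cnj (?T m x p) * X $$ (x, y) * ?T m y q)
        = (\<Sum>i<n. \<Sum>k<dA. \<Sum>j<n. \<Sum>l<dA. cnj (?T m (i * dA + k) p) * X $$ (i * dA + k, j * dA + l) * ?T m (j * dA + l) q)"
      by (simp add: sum_lessThan_mult)
    also have "\<dots> = (\<Sum>k<dA. \<Sum>l<dA. cnj (?T m (?i * dA + k) p) * X $$ (?i * dA + k, ?j * dA + l) * ?T m (?j * dA + l) q)"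
      unfolding kraus_adj_def using ij by (simp add: if_zero_simps)
    finally show "(\<Sum>k<dA. \<Sum>l<dA. cnj (?T m (?i * dA + k) p) * X $$ (?i * dA + k, ?j * dA + l) * ?T m (?j * dA + l) q)
        = (\<Sum>x<n * dA. \<Sum>y<n * dA. cnj (?T m x p) * X $$ (x, y) * ?T m y q)" by simp
  qed
  finally show ?thesis .
qed

lemma psd_par_id_choi_map:
  assumes C: "psd (dB * dA) C" and X: "psd (n * dA) X" and dA: "0 < dA" and dB: "0 < dB"
  shows "psd (n * dB) (par n dA n dB (\<lambda>Y. Y) (choi_map dA dB C) X)"
proof -
  obtain w where w: "\<forall>r<dB * dA. \<forall>s<dB * dA. C $$ (r, s) = (\<Sum>m<dB * dA. w m r * cnj (w m s))"
    using psd_gram_decomposition[OF C] by blast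
  let ?Y = "par n dA n dB (\<lambda>Y. Y) (choi_map dA dB C) X"
  have Y_eq: "?Y = mat (n * dB) (n * dB) (\<lambda>(p, q). \<Sum>m<dB * dA. \<Sum>x<n * dA. \<Sum>y<n * dA.
      cnj (kraus_adj dA dB w m x p) * X $$ (x, y) * kraus_adj dA dB w m y q)"
    by (rule eq_matI) (simp_all add: par_id_choi_map_kraus[OF w dA dB])
  have "0 \<le> quad_form (n * dB) ?Y v" for v
    unfolding Y_eq
    by (subst quad_form_sum, subst quad_form_congruence, rule sum_nonneg)
      (use X in \<open>simp add: psd_iff_quad_form\<close>)
  then show ?thesis unfolding psd_iff_quad_form by (simp add: carrier_matI)
qed

lemma channel_if_psd_choi:
  assumes A: "is_sys A" and B: "is_sys B" and lin: "lin_map (dim A) (dim B) M"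
    and tp: "\<forall>X\<in>carrier_mat (dim A) (dim A). mtrace (M X) = mtrace X"
    and psd: "psd (dim B * dim A) (choi (dim A) (dim B) M)"
  shows "channel A B M"
  unfolding channel_def
proof (intro conjI allI impI lin tp)
  fix n X assume X: "psd (n * dim A) X"
  have "par n (dim A) n (dim B) (\<lambda>Y. Y) M X
      = par n (dim A) n (dim B) (\<lambda>Y. Y) (choi_map (dim A) (dim B) (choi (dim A) (dim B) M)) X"
    unfolding par_def using choi_map_choi_munit[OF lin] by (auto intro!: eq_matI sum.cong)
  then show "psd (n * dim B) (par n (dim A) n (dim B) (\<lambda>Y. Y) M X)"
    using psd_par_id_choi_map[OF psd X dim_pos[OF A] dim_pos[OF B]] by simp
qed

section \<open>Renormalized Choi matrices of the structural operations\<close>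

lemma rchoi_id:
  assumes "is_sys A"
  shows "rchoi A A (\<lambda>X. X) = max_ent (dim A)"
  using dim_pos[OF assms]
  by (intro eq_mat_blockI[OF rchoi_carrier]) (simp_all add: max_ent_carrier rchoi_entry max_ent_entry)

lemma swap_mat_lin: "lin_map (dA * dB) (dB * dA) (swap_mat dA dB)"
proof -
  have "(r mod dA) * dB + r div dA < dA * dB" if "r < dB * dA" for r
  proof -
    have "0 < dA" using that by (cases dA) auto
    with that show ?thesis by (intro mult_index_less) (auto simp: less_mult_imp_div_less)
  qed
  then show ?thesis unfolding lin_map_def swap_mat_def by (auto intro!: eq_matI)
qed

lemma trace_swap_mat:
  assumes X: "X \<in> carrier_mat (dA * dB) (dA * dB)"
  shows "mtrace (swap_mat dA dB X) = mtrace X"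
proof -
  have "mtrace (swap_mat dA dB X) = (\<Sum>r<dB * dA. X $$ ((r mod dA) * dB + r div dA, (r mod dA) * dB + r div dA))"
    unfolding mtrace_def swap_mat_def by simp
  also have "\<dots> = (\<Sum>c<dB. \<Sum>b<dA. X $$ (b * dB + c, b * dB + c))"
    unfolding sum_lessThan_mult by simp
  also have "\<dots> = (\<Sum>b<dA. \<Sum>c<dB. X $$ (b * dB + c, b * dB + c))"
    by (rule sum.swap)
  also have "\<dots> = mtrace X" unfolding mtrace_def using X by (simp add: sum_lessThan_mult)
  finally show ?thesis .
qed

lemma swap_idx_two_factors:
  assumes "i < b * a" "k < d"
  shows "swap_idx a b d (i * d + k) = ((i mod a) * b + i div a) * d + k"
proof -
  have "0 < a" using assms(1) by (cases a) auto
  then have "i mod a < a" "i div a < b" using assms(1) by (auto simp: less_mult_imp_div_less)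
  moreover have "i * d + k = ((0 * b + i div a) * a + i mod a) * d + k" by simp
  ultimately show ?thesis using assms(2) swap_idx_eq[of "i mod a" a "i div a" b k d 0] by simp
qed

lemma rchoi_swap:
  assumes A: "is_sys A" and B: "is_sys B"
  shows "rchoi (A @ B) (B @ A) (swap_mat (dim A) (dim B)) =
    swap_mid 1 (dim A) (dim B) (dim A * dim B) (max_ent (dim A * dim B))"
proof (rule eq_mat_blockI)
  let ?a = "dim A" and ?b = "dim B"
  show "rchoi (A @ B) (B @ A) (swap_mat ?a ?b) \<in> carrier_mat (?b * ?a * (?a * ?b)) (?b * ?a * (?a * ?b))"
    using rchoi_carrier[of "A @ B" "B @ A"] by simp
  show "swap_mid 1 ?a ?b (?a * ?b) (max_ent (?a * ?b)) \<in> carrier_mat (?b * ?a * (?a * ?b)) (?b * ?a * (?a * ?b))"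
    using swap_mid_carrier[of 1 ?a ?b "?a * ?b"] by simp
  fix i j k l assume i: "i < ?b * ?a" and j: "j < ?b * ?a" and k: "k < ?a * ?b" and l: "l < ?a * ?b"
  have a: "0 < ?a" using dim_pos[OF A] .
  let ?s = "\<lambda>i. (i mod ?a) * ?b + i div ?a"
  have s: "?s i < ?a * ?b" "?s j < ?a * ?b"
    using i j a by (auto intro!: mult_index_less simp: less_mult_imp_div_less)
  have "rchoi (A @ B) (B @ A) (swap_mat ?a ?b) $$ (i * (?a * ?b) + k, j * (?a * ?b) + l)
      = (1 / of_nat (?a * ?b)) * (if ?s i = k \<and> ?s j = l then 1 else 0)"
    using rchoi_entry[of i "B @ A" j k "A @ B" l] i j k l s unfolding swap_mat_def by simp
  also have "\<dots> = max_ent (?a * ?b) $$ (?s i * (?a * ?b) + k, ?s j * (?a * ?b) + l)"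
    using max_ent_entry[OF s k l] by simp
  also have "\<dots> = swap_mid 1 ?a ?b (?a * ?b) (max_ent (?a * ?b)) $$ (i * (?a * ?b) + k, j * (?a * ?b) + l)"
    using swap_mid_entry[of "i * (?a * ?b) + k" 1 ?b ?a "?a * ?b" "j * (?a * ?b) + l"]
      mult_index_less[OF i k] mult_index_less[OF j l] swap_idx_two_factors[OF i k] swap_idx_two_factors[OF j l]
    by simp
  finally show "rchoi (A @ B) (B @ A) (swap_mat ?a ?b) $$ (i * (?a * ?b) + k, j * (?a * ?b) + l) =
      swap_mid 1 ?a ?b (?a * ?b) (max_ent (?a * ?b)) $$ (i * (?a * ?b) + k, j * (?a * ?b) + l)" .
qed

lemma ptrace_fst_max_ent: "0 < d \<Longrightarrow> ptrace_fst d d (max_ent d) = max_mixed d"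
  by (auto intro!: eq_matI sum.cong simp: ptrace_fst_def max_ent_entry if_zero_simps)

lemma ptrace_snd_lin: "0 < b \<Longrightarrow> lin_map (a * b) a (ptrace_snd a b)"
  unfolding lin_map_def ptrace_snd_def using mult_index_less[of _ a _ b]
  by (auto intro!: eq_matI simp: sum.distrib sum_distrib_left)

lemma trace_ptrace_snd: "X \<in> carrier_mat (a * b) (a * b) \<Longrightarrow> mtrace (ptrace_snd a b X) = mtrace X"
  unfolding mtrace_def ptrace_snd_def by (simp add: sum_lessThan_mult)

lemma rchoi_discard:
  assumes A: "is_sys A" and B: "is_sys B"
  shows "rchoi (A @ B) A (ptrace_snd (dim A) (dim B)) = kron (max_ent (dim A)) (max_mixed (dim B))"
proof (rule eq_mat_blockI)
  let ?a = "dim A" and ?b = "dim B"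
  show "rchoi (A @ B) A (ptrace_snd ?a ?b) \<in> carrier_mat (?a * (?a * ?b)) (?a * (?a * ?b))"
    using rchoi_carrier[of "A @ B" A] by simp
  show "kron (max_ent ?a) (max_mixed ?b) \<in> carrier_mat (?a * (?a * ?b)) (?a * (?a * ?b))"
    using kron_carrier[OF max_ent_carrier, of "max_mixed ?b" ?b] by (simp add: mult_ac)
  fix i j k l assume i: "i < ?a" and j: "j < ?a" and k: "k < ?a * ?b" and l: "l < ?a * ?b"
  obtain k1 k2 where k1: "k1 < ?a" and k2: "k2 < ?b" and k12: "k = k1 * ?b + k2"
    using mult_index_cases[OF k] .
  obtain l1 l2 where l1: "l1 < ?a" and l2: "l2 < ?b" and l12: "l = l1 * ?b + l2"
    using mult_index_cases[OF l] .
  have idx: "x * (?a * ?b) + (y * ?b + z) = (x * ?a + y) * ?b + z" for x y z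
    by (simp add: algebra_simps)
  have "rchoi (A @ B) A (ptrace_snd ?a ?b) $$ (i * (?a * ?b) + k, j * (?a * ?b) + l)
      = (1 / of_nat (?a * ?b)) * (\<Sum>t<?b. if i * ?b + t = k \<and> j * ?b + t = l then 1 else 0)"
    using rchoi_entry[of i A j k "A @ B" l] i j k l mult_index_less[of i ?a _ ?b] mult_index_less[of j ?a _ ?b]
    by (simp add: ptrace_snd_def)
  also have "\<dots> = (1 / of_nat ?a) * (if i = k1 \<and> j = l1 then 1 else 0) * ((1 / of_nat ?b) * (if k2 = l2 then 1 else 0))"
    using k2 l2 unfolding k12 l12 by (auto simp: if_zero_simps)
  also have "\<dots> = kron (max_ent ?a) (max_mixed ?b) $$ (i * (?a * ?b) + k, j * (?a * ?b) + l)"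
    unfolding k12 l12 idx using i j k1 k2 l1 l2
    by (subst kron_entry[OF max_ent_carrier]) (auto simp: mult_index_less max_ent_entry)
  finally show "rchoi (A @ B) A (ptrace_snd ?a ?b) $$ (i * (?a * ?b) + k, j * (?a * ?b) + l) =
      kron (max_ent ?a) (max_mixed ?b) $$ (i * (?a * ?b) + k, j * (?a * ?b) + l)" .
qed

lemma par_lin: "lin_map (dA1 * dA2) (dB1 * dB2) (par dA1 dA2 dB1 dB2 M N)"
  unfolding lin_map_def par_def using mult_index_less[of _ dA1 _ dA2]
  by (auto intro!: eq_matI simp: distrib_right sum.distrib sum_distrib_left mult.assoc)

lemma par_munit_entry:
  assumes "i1 < b1" "j1 < b1" "i2 < b2" "j2 < b2" "k1 < a1" "l1 < a1" "k2 < a2" "l2 < a2"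
  shows "par a1 a2 b1 b2 M N (munit (a1 * a2) (k1 * a2 + k2) (l1 * a2 + l2)) $$ (i1 * b2 + i2, j1 * b2 + j2)
    = M (munit a1 k1 l1) $$ (i1, j1) * N (munit a2 k2 l2) $$ (i2, j2)"
  using assms mult_index_less[of i1 b1 i2 b2] mult_index_less[of j1 b1 j2 b2]
  by (simp add: par_entry mult_index_less if_zero_simps)

lemma trace_par:
  assumes X: "X \<in> carrier_mat (dA1 * dA2) (dA1 * dA2)"
    and cM: "\<And>i j. M (munit dA1 i j) \<in> carrier_mat dB1 dB1"
    and cN: "\<And>k l. N (munit dA2 k l) \<in> carrier_mat dB2 dB2"
    and tM: "\<And>i j. i < dA1 \<Longrightarrow> j < dA1 \<Longrightarrow> mtrace (M (munit dA1 i j)) = (if i = j then 1 else 0)"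
    and tN: "\<And>k l. k < dA2 \<Longrightarrow> l < dA2 \<Longrightarrow> mtrace (N (munit dA2 k l)) = (if k = l then 1 else 0)"
  shows "mtrace (par dA1 dA2 dB1 dB2 M N X) = mtrace X"
proof -
  let ?f = "\<lambda>b1 b2 i j k l. X $$ (i * dA2 + k, j * dA2 + l) * M (munit dA1 i j) $$ (b1, b1) * N (munit dA2 k l) $$ (b2, b2)"
  have "mtrace (par dA1 dA2 dB1 dB2 M N X)
      = (\<Sum>b1<dB1. \<Sum>b2<dB2. \<Sum>i<dA1. \<Sum>j<dA1. \<Sum>k<dA2. \<Sum>l<dA2. ?f b1 b2 i j k l)"
    unfolding mtrace_def par_def by (simp add: sum_lessThan_mult)
  also have "\<dots> = (\<Sum>i<dA1. \<Sum>j<dA1. \<Sum>k<dA2. \<Sum>l<dA2. \<Sum>b1<dB1. \<Sum>b2<dB2. ?f b1 b2 i j k l)"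
  proof -
    define G where "G = (\<lambda>(b1, b2) (i, j, k, l). ?f b1 b2 i j k l)"
    have "(\<Sum>b1<dB1. \<Sum>b2<dB2. \<Sum>i<dA1. \<Sum>j<dA1. \<Sum>k<dA2. \<Sum>l<dA2. ?f b1 b2 i j k l)
        = (\<Sum>bb\<in>{..<dB1} \<times> {..<dB2}. \<Sum>t\<in>{..<dA1} \<times> {..<dA1} \<times> {..<dA2} \<times> {..<dA2}. G bb t)"
      by (simp only: sum.cartesian_product' G_def split)
    also have "\<dots> = (\<Sum>t\<in>{..<dA1} \<times> {..<dA1} \<times> {..<dA2} \<times> {..<dA2}. \<Sum>bb\<in>{..<dB1} \<times> {..<dB2}. G bb t)"
      by (rule sum.swap)
    also have "\<dots> = (\<Sum>i<dA1. \<Sum>j<dA1. \<Sum>k<dA2. \<Sum>l<dA2. \<Sum>b1<dB1. \<Sum>b2<dB2. ?f b1 b2 i j k l)"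
      by (simp only: sum.cartesian_product' G_def split)
    finally show ?thesis .
  qed
  also have "\<dots> = (\<Sum>i<dA1. \<Sum>j<dA1. \<Sum>k<dA2. \<Sum>l<dA2.
      X $$ (i * dA2 + k, j * dA2 + l) * mtrace (M (munit dA1 i j)) * mtrace (N (munit dA2 k l)))"
  proof -
    have "dim_row (M (munit dA1 i j)) = dB1" "dim_row (N (munit dA2 k l)) = dB2" for i j k l
      using cM[of i j] cN[of k l] by auto
    then show ?thesis unfolding mtrace_def
      by (simp add: sum_distrib_left sum_distrib_right mult.assoc sum.swap[of _ "{..<dB1}"])
  qed
  also have "\<dots> = (\<Sum>i<dA1. \<Sum>k<dA2. X $$ (i * dA2 + k, i * dA2 + k))"
    by (simp add: tM tN if_zero_simps)
  also have "\<dots> = mtrace X" unfolding mtrace_def using X by (simp add: sum_lessThan_mult)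
  finally show ?thesis .
qed

lemma rchoi_par:
  shows "rchoi (A1 @ A2) (B1 @ B2) (par (dim A1) (dim A2) (dim B1) (dim B2) M N) =
    swap_mid (dim B1) (dim A1) (dim B2) (dim A2) (kron (rchoi A1 B1 M) (rchoi A2 B2 N))"
proof (rule eq_mat_blockI)
  let ?a1 = "dim A1" and ?a2 = "dim A2" and ?b1 = "dim B1" and ?b2 = "dim B2"
  let ?P = "par ?a1 ?a2 ?b1 ?b2 M N"
  let ?S = "swap_mid ?b1 ?a1 ?b2 ?a2 (kron (rchoi A1 B1 M) (rchoi A2 B2 N))"
  show "rchoi (A1 @ A2) (B1 @ B2) ?P \<in> carrier_mat (?b1 * ?b2 * (?a1 * ?a2)) (?b1 * ?b2 * (?a1 * ?a2))"
    using rchoi_carrier[of "A1 @ A2" "B1 @ B2"] by simp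
  show "?S \<in> carrier_mat (?b1 * ?b2 * (?a1 * ?a2)) (?b1 * ?b2 * (?a1 * ?a2))"
    using swap_mid_carrier[of ?b1 ?a1 ?b2 ?a2] by (simp add: mult.assoc)
  fix i j k l assume i: "i < ?b1 * ?b2" and j: "j < ?b1 * ?b2" and k: "k < ?a1 * ?a2" and l: "l < ?a1 * ?a2"
  obtain i1 i2 where i1: "i1 < ?b1" and i2: "i2 < ?b2" and i12: "i = i1 * ?b2 + i2" using mult_index_cases[OF i] .
  obtain j1 j2 where j1: "j1 < ?b1" and j2: "j2 < ?b2" and j12: "j = j1 * ?b2 + j2" using mult_index_cases[OF j] .
  obtain k1 k2 where k1: "k1 < ?a1" and k2: "k2 < ?a2" and k12: "k = k1 * ?a2 + k2" using mult_index_cases[OF k] .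
  obtain l1 l2 where l1: "l1 < ?a1" and l2: "l2 < ?a2" and l12: "l = l1 * ?a2 + l2" using mult_index_cases[OF l] .
  have "?P (munit (?a1 * ?a2) k l) $$ (i, j) = M (munit ?a1 k1 l1) $$ (i1, j1) * N (munit ?a2 k2 l2) $$ (i2, j2)"
    unfolding i12 j12 k12 l12 by (rule par_munit_entry) fact+
  then have "rchoi (A1 @ A2) (B1 @ B2) ?P $$ (i * (?a1 * ?a2) + k, j * (?a1 * ?a2) + l)
      = (1 / of_nat ?a1) * M (munit ?a1 k1 l1) $$ (i1, j1) * ((1 / of_nat ?a2) * N (munit ?a2 k2 l2) $$ (i2, j2))"
    using rchoi_entry[of i "B1 @ B2" j k "A1 @ A2" l ?P] i j k l by simp
  also have "\<dots> = kron (rchoi A1 B1 M) (rchoi A2 B2 N) $$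
      ((i1 * ?a1 + k1) * (?b2 * ?a2) + (i2 * ?a2 + k2), (j1 * ?a1 + l1) * (?b2 * ?a2) + (j2 * ?a2 + l2))"
    using i1 i2 j1 j2 k1 k2 l1 l2
    by (subst kron_entry[OF rchoi_carrier rchoi_carrier]) (auto simp: mult_index_less rchoi_entry)
  also have "\<dots> = ?S $$ (i * (?a1 * ?a2) + k, j * (?a1 * ?a2) + l)"
  proof -
    have idx: "x * (a1 * a2) + (y1 * a2 + y2) = ((x1 * b2 + x2) * a1 + y1) * a2 + y2"
      if "x = x1 * b2 + x2" for x x1 x2 y1 y2 a1 a2 b2 :: nat
      using that by (simp add: algebra_simps)
    have si: "swap_idx ?a1 ?b2 ?a2 (i * (?a1 * ?a2) + k) = (i1 * ?a1 + k1) * (?b2 * ?a2) + (i2 * ?a2 + k2)"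
      and sj: "swap_idx ?a1 ?b2 ?a2 (j * (?a1 * ?a2) + l) = (j1 * ?a1 + l1) * (?b2 * ?a2) + (j2 * ?a2 + l2)"
      unfolding k12 l12 idx[OF i12] idx[OF j12] swap_idx_eq[OF k1 i2 k2] swap_idx_eq[OF l1 j2 l2]
      by (simp_all add: algebra_simps)
    have "i * (?a1 * ?a2) + k < ?b1 * ?b2 * ?a1 * ?a2" "j * (?a1 * ?a2) + l < ?b1 * ?b2 * ?a1 * ?a2"
      using mult_index_less[OF i k] mult_index_less[OF j l] by (simp_all add: mult.assoc)
    from swap_mid_entry[where dB = ?a1, OF this] show ?thesis unfolding si sj ..
  qed
  finally show "rchoi (A1 @ A2) (B1 @ B2) ?P $$ (i * (?a1 * ?a2) + k, j * (?a1 * ?a2) + l) =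
      ?S $$ (i * (?a1 * ?a2) + k, j * (?a1 * ?a2) + l)" .
qed

lemma rchoi_comp:
  assumes linM: "lin_map (dim A) (dim B) M" and linN: "lin_map (dim B) (dim C) N"
  shows "rchoi A C (N \<circ> M) = par (dim B) (dim A) (dim C) (dim A) N (\<lambda>X. X) (rchoi A B M)"
proof (rule eq_mat_blockI[OF rchoi_carrier])
  let ?a = "dim A" and ?b = "dim B" and ?c = "dim C"
  show "par ?b ?a ?c ?a N (\<lambda>X. X) (rchoi A B M) \<in> carrier_mat (?c * ?a) (?c * ?a)"
    by (simp add: carrier_matI)
  fix i j k l assume i: "i < ?c" and j: "j < ?c" and k: "k < ?a" and l: "l < ?a"
  have MX: "M (munit ?a k l) \<in> carrier_mat ?b ?b" using lin_map_carrier[OF linM munit_carrier] .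
  have "rchoi A C (N \<circ> M) $$ (i * ?a + k, j * ?a + l) = (1 / of_nat ?a) * N (M (munit ?a k l)) $$ (i, j)"
    using rchoi_entry[OF i j k l] by simp
  also have "N (M (munit ?a k l)) = choi_map ?b ?c (choi ?b ?c N) (M (munit ?a k l))"
    using choi_map_choi[OF linN MX] ..
  also have "(1 / of_nat ?a) * choi_map ?b ?c (choi ?b ?c N) (M (munit ?a k l)) $$ (i, j)
      = (\<Sum>x<?b. \<Sum>y<?b. rchoi A B M $$ (x * ?a + k, y * ?a + l) * N (munit ?b x y) $$ (i, j))"
    using i j k l MX by (simp add: choi_map_def choi_entry rchoi_entry sum_distrib_left mult_ac)
  also have "\<dots> = par ?b ?a ?c ?a N (\<lambda>X. X) (rchoi A B M) $$ (i * ?a + k, j * ?a + l)"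
    using i j k l mult_index_less[OF i k] mult_index_less[OF j l]
    by (simp add: par_entry if_zero_simps)
  finally show "rchoi A C (N \<circ> M) $$ (i * ?a + k, j * ?a + l) =
      par ?b ?a ?c ?a N (\<lambda>X. X) (rchoi A B M) $$ (i * ?a + k, j * ?a + l)" .
qed

definition state_prep :: "complex mat \<Rightarrow> complex mat \<Rightarrow> complex mat" where
  "state_prep \<rho> X = X $$ (0, 0) \<cdot>\<^sub>m \<rho>"

lemma state_prep_munit: "\<rho> \<in> carrier_mat n n \<Longrightarrow> state_prep \<rho> (munit 1 0 0) = \<rho>"
  unfolding state_prep_def by (auto intro!: eq_matI)

lemma rchoi_state_prep:
  assumes "\<rho> \<in> carrier_mat (dim A) (dim A)"
  shows "rchoi [] A (state_prep \<rho>) = \<rho>"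
  using rchoi_Nil[of "state_prep \<rho>" A] assms unfolding state_prep_munit[OF assms] by blast

lemma rchoi_choi_map:
  assumes "is_sys A" "\<mu> \<in> carrier_mat (dim B * dim A) (dim B * dim A)"
  shows "rchoi A B (choi_map (dim A) (dim B) (of_nat (dim A) \<cdot>\<^sub>m \<mu>)) = \<mu>"
  using assms dim_pos[of A] unfolding rchoi_def
  by (subst choi_choi_map) (auto intro!: eq_matI)

lemma CD_op_lin: "CD_op F A B M \<Longrightarrow> lin_map (dim A) (dim B) M"
  and CD_op_trace: "CD_op F A B M \<Longrightarrow> X \<in> carrier_mat (dim A) (dim A) \<Longrightarrow> mtrace (M X) = mtrace X"
  and CD_op_free: "CD_op F A B M \<Longrightarrow> rchoi A B M \<in> F (B @ A)"
  unfolding CD_op_def channel_def by blast+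

definition max_ent_free :: "free_states \<Rightarrow> bool" where
  "max_ent_free F \<longleftrightarrow> (\<forall>A. is_sys A \<longrightarrow> max_ent (dim A) \<in> F (A @ A))"

definition link_closed :: "free_states \<Rightarrow> bool" where
  "link_closed F \<longleftrightarrow> (\<forall>A B. is_sys A \<longrightarrow> is_sys B \<longrightarrow>
     (\<forall>\<rho>\<in>F A. \<forall>\<mu>\<in>F (B @ A). ptrace_fst (dim B) (dim A) \<mu> = max_mixed (dim A) \<longrightarrow>
        of_nat (dim A) \<cdot>\<^sub>m ptrace_snd (dim B) (dim A) (\<mu> * kron (1\<^sub>m (dim B)) (transpose_mat \<rho>)) \<in> F B))"

lemma max_ent_freeD: "max_ent_free F \<Longrightarrow> is_sys A \<Longrightarrow> max_ent (dim A) \<in> F (A @ A)"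
  unfolding max_ent_free_def by blast

lemma link_closedD:
  "link_closed F \<Longrightarrow> is_sys A \<Longrightarrow> is_sys B \<Longrightarrow> \<rho> \<in> F A \<Longrightarrow> \<mu> \<in> F (B @ A) \<Longrightarrow>
    ptrace_fst (dim B) (dim A) \<mu> = max_mixed (dim A) \<Longrightarrow>
    of_nat (dim A) \<cdot>\<^sub>m ptrace_snd (dim B) (dim A) (\<mu> * kron (1\<^sub>m (dim B)) (transpose_mat \<rho>)) \<in> F B"
  unfolding link_closed_def by blast

context
  fixes F :: free_states
  assumes adm: "admissible_free_states F"
begin

lemma free_density: "is_sys A \<Longrightarrow> \<rho> \<in> F A \<Longrightarrow> density (dim A) \<rho>"
  using adm unfolding admissible_free_states_def by blast

lemma free_carrier: "is_sys A \<Longrightarrow> \<rho> \<in> F A \<Longrightarrow> \<rho> \<in> carrier_mat (dim A) (dim A)"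
  using free_density unfolding density_def psd_def by blast

lemma free_kron: "is_sys A \<Longrightarrow> is_sys B \<Longrightarrow> \<rho> \<in> F A \<Longrightarrow> \<sigma> \<in> F B \<Longrightarrow> kron \<rho> \<sigma> \<in> F (A @ B)"
  using adm unfolding admissible_free_states_def by blast

lemma free_ptrace_fst: "is_sys A \<Longrightarrow> is_sys B \<Longrightarrow> \<rho> \<in> F (A @ B) \<Longrightarrow> ptrace_fst (dim A) (dim B) \<rho> \<in> F B"
  using adm unfolding admissible_free_states_def by blast

lemma free_swap_mid:
  "is_sys A \<Longrightarrow> is_sys B \<Longrightarrow> is_sys C \<Longrightarrow> is_sys D \<Longrightarrow> \<rho> \<in> F (A @ B @ C @ D) \<Longrightarrow>
    swap_mid (dim A) (dim B) (dim C) (dim D) \<rho> \<in> F (A @ C @ B @ D)"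
  using adm unfolding admissible_free_states_def by blast

lemma CD_opI:
  assumes A: "is_sys A" and B: "is_sys B" and lin: "lin_map (dim A) (dim B) M"
    and tp: "\<forall>X\<in>carrier_mat (dim A) (dim A). mtrace (M X) = mtrace X"
    and free: "rchoi A B M \<in> F (B @ A)"
  shows "CD_op F A B M"
proof -
  have "psd (dim B * dim A) (rchoi A B M)"
    using free_density[of "B @ A"] A B free unfolding density_def by simp
  moreover have "choi (dim A) (dim B) M = of_real (real (dim A)) \<cdot>\<^sub>m rchoi A B M"
    unfolding rchoi_def using dim_pos[OF A] by (auto intro!: eq_matI)
  ultimately have "psd (dim B * dim A) (choi (dim A) (dim B) M)"
    using psd_smult[of _ "rchoi A B M" "real (dim A)"] by simp
  then show ?thesis unfolding CD_op_def using channel_if_psd_choi[OF A B lin tp] free by simp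
qed

lemma CD_op_id: "max_ent_free F \<Longrightarrow> is_sys A \<Longrightarrow> CD_op F A A (\<lambda>X. X)"
  by (rule CD_opI) (auto simp: lin_map_def rchoi_id max_ent_freeD)

lemma CD_op_swap:
  assumes "max_ent_free F" "is_sys A" "is_sys B"
  shows "CD_op F (A @ B) (B @ A) (swap_mat (dim A) (dim B))"
proof (rule CD_opI)
  have "max_ent (dim (A @ B)) \<in> F ((A @ B) @ (A @ B))"
    using assms by (intro max_ent_freeD) simp_all
  then have "swap_mid (dim []) (dim A) (dim B) (dim (A @ B)) (max_ent (dim (A @ B))) \<in> F ([] @ B @ A @ (A @ B))"
    using assms by (intro free_swap_mid) simp_all
  then show "rchoi (A @ B) (B @ A) (swap_mat (dim A) (dim B)) \<in> F ((B @ A) @ A @ B)"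
    using assms by (simp add: rchoi_swap)
qed (use assms dim_pos swap_mat_lin trace_swap_mat in auto)

lemma CD_op_discard:
  assumes "max_ent_free F" "is_sys A" "is_sys B"
  shows "CD_op F (A @ B) A (ptrace_snd (dim A) (dim B))"
proof (rule CD_opI)
  have "ptrace_fst (dim B) (dim B) (max_ent (dim B)) \<in> F B"
    using assms by (intro free_ptrace_fst max_ent_freeD)
  then have "max_mixed (dim B) \<in> F B" using ptrace_fst_max_ent dim_pos assms(3) by simp
  then have "kron (max_ent (dim A)) (max_mixed (dim B)) \<in> F ((A @ A) @ B)"
    using assms by (intro free_kron max_ent_freeD) simp_all
  then show "rchoi (A @ B) A (ptrace_snd (dim A) (dim B)) \<in> F (A @ A @ B)"
    using assms by (simp add: rchoi_discard)
qed (use assms dim_pos ptrace_snd_lin trace_ptrace_snd in auto)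

lemma CD_op_par:
  assumes A1: "is_sys A1" and A2: "is_sys A2" and B1: "is_sys B1" and B2: "is_sys B2"
    and M: "CD_op F A1 B1 M" and N: "CD_op F A2 B2 N"
  shows "CD_op F (A1 @ A2) (B1 @ B2) (par (dim A1) (dim A2) (dim B1) (dim B2) M N)"
proof (rule CD_opI)
  show "\<forall>X\<in>carrier_mat (dim (A1 @ A2)) (dim (A1 @ A2)). mtrace (par (dim A1) (dim A2) (dim B1) (dim B2) M N X) = mtrace X"
    using trace_par lin_map_carrier[OF CD_op_lin[OF M] munit_carrier] lin_map_carrier[OF CD_op_lin[OF N] munit_carrier]
      CD_op_trace[OF M munit_carrier] CD_op_trace[OF N munit_carrier] by (simp add: mtrace_munit)
  have "kron (rchoi A1 B1 M) (rchoi A2 B2 N) \<in> F (B1 @ A1 @ B2 @ A2)"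
    using free_kron[OF _ _ CD_op_free[OF M] CD_op_free[OF N]] assms by simp
  from free_swap_mid[OF B1 A1 B2 A2 this]
  show "rchoi (A1 @ A2) (B1 @ B2) (par (dim A1) (dim A2) (dim B1) (dim B2) M N) \<in> F ((B1 @ B2) @ A1 @ A2)"
    by (simp add: rchoi_par)
qed (use assms par_lin in simp_all)

lemma CD_op_comp:
  assumes H1: "max_ent_free F" and H2: "link_closed F"
    and A: "is_sys A" and B: "is_sys B" and C: "is_sys C"
    and M: "CD_op F A B M" and N: "CD_op F B C N"
  shows "CD_op F A C (N \<circ> M)"
proof (rule CD_opI[OF A C])
  show "lin_map (dim A) (dim C) (N \<circ> M)"
    using CD_op_lin[OF M] CD_op_lin[OF N] unfolding lin_map_def by auto
  show "\<forall>X\<in>carrier_mat (dim A) (dim A). mtrace ((N \<circ> M) X) = mtrace X"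
    using CD_op_trace[OF M] CD_op_trace[OF N] lin_map_carrier[OF CD_op_lin[OF M]] by simp
  let ?NA = "par (dim B) (dim A) (dim C) (dim A) N (\<lambda>X. X)"
  have BA: "is_sys (B @ A)" and CA: "is_sys (C @ A)" using A B C by simp_all
  have NA: "CD_op F (B @ A) (C @ A) ?NA"
    using CD_op_par[OF B A C A N CD_op_id[OF H1 A]] by simp
  have "ptrace_fst (dim (C @ A)) (dim (B @ A)) (rchoi (B @ A) (C @ A) ?NA) = max_mixed (dim (B @ A))"
    by (rule ptrace_fst_rchoi[OF CD_op_lin[OF NA] CD_op_trace[OF NA]])
  from link_closedD[OF H2 BA CA CD_op_free[OF M] CD_op_free[OF NA] this]
  have "of_nat (dim (B @ A)) \<cdot>\<^sub>m ptrace_snd (dim (C @ A)) (dim (B @ A))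
      (rchoi (B @ A) (C @ A) ?NA * kron (1\<^sub>m (dim (C @ A))) (transpose_mat (rchoi A B M))) \<in> F (C @ A)" .
  moreover have "rchoi A B M \<in> carrier_mat (dim (B @ A)) (dim (B @ A))"
    using rchoi_carrier[of A B M] by simp
  ultimately show "rchoi A C (N \<circ> M) \<in> F (C @ A)"
    unfolding rchoi_comp[OF CD_op_lin[OF M] CD_op_lin[OF N]] using link_rchoi[OF BA CD_op_lin[OF NA]] by simp
qed

lemma CD_op_state_prep: "is_sys A \<Longrightarrow> \<rho> \<in> F A \<Longrightarrow> CD_op F [] A (state_prep \<rho>)"
  using free_carrier[of A \<rho>] free_density[of A \<rho>]
  by (intro CD_opI) (auto simp: lin_map_def state_prep_def rchoi_state_prep density_def mtrace_def
      distrib_right intro!: eq_matI simp flip: sum_distrib_left)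

lemma CD_op_choi_map:
  assumes A: "is_sys A" and B: "is_sys B" and \<mu>: "\<mu> \<in> F (B @ A)"
    and marg: "ptrace_fst (dim B) (dim A) \<mu> = max_mixed (dim A)"
  shows "CD_op F A B (choi_map (dim A) (dim B) (of_nat (dim A) \<cdot>\<^sub>m \<mu>))"
proof (rule CD_opI[OF A B lin_map_choi_map])
  have carrier: "\<mu> \<in> carrier_mat (dim B * dim A) (dim B * dim A)" using free_carrier[of "B @ A"] A B \<mu> by simp
  have "ptrace_fst (dim B) (dim A) (of_nat (dim A) \<cdot>\<^sub>m \<mu>) = of_nat (dim A) \<cdot>\<^sub>m max_mixed (dim A)"
    unfolding marg[symmetric] ptrace_fst_def using carrier
    by (auto intro!: eq_matI simp: sum_distrib_left mult_index_less)
  also have "\<dots> = 1\<^sub>m (dim A)" using dim_pos[OF A] by (auto intro!: eq_matI)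
  finally show "\<forall>X\<in>carrier_mat (dim A) (dim A). mtrace (choi_map (dim A) (dim B) (of_nat (dim A) \<cdot>\<^sub>m \<mu>) X) = mtrace X"
    using trace_choi_map by blast
  show "rchoi A B (choi_map (dim A) (dim B) (of_nat (dim A) \<cdot>\<^sub>m \<mu>)) \<in> F (B @ A)"
    using rchoi_choi_map[OF A carrier] \<mu> by simp
qed

lemma link_closed_if_comp_closed:
  assumes comp: "\<And>A B C M N. is_sys A \<Longrightarrow> is_sys B \<Longrightarrow> is_sys C \<Longrightarrow>
      CD_op F A B M \<Longrightarrow> CD_op F B C N \<Longrightarrow> CD_op F A C (N \<circ> M)"
  shows "link_closed F"
  unfolding link_closed_def
proof (intro allI impI ballI)
  fix A B \<rho> \<mu> assume A: "is_sys A" and B: "is_sys B" and \<rho>: "\<rho> \<in> F A" and \<mu>: "\<mu> \<in> F (B @ A)"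
    and marg: "ptrace_fst (dim B) (dim A) \<mu> = max_mixed (dim A)"
  let ?L = "choi_map (dim A) (dim B) (of_nat (dim A) \<cdot>\<^sub>m \<mu>)"
  have "CD_op F [] B (?L \<circ> state_prep \<rho>)"
    by (rule comp[OF is_sys_Nil A B CD_op_state_prep[OF A \<rho>] CD_op_choi_map[OF A B \<mu> marg]])
  then have "rchoi [] B (?L \<circ> state_prep \<rho>) \<in> F B" using CD_op_free by fastforce
  moreover have "rchoi [] B (?L \<circ> state_prep \<rho>) = ?L \<rho>"
    using rchoi_Nil[of "?L \<circ> state_prep \<rho>" B] state_prep_munit[OF free_carrier[OF A \<rho>]] by simp
  moreover have "\<mu> \<in> carrier_mat (dim B * dim A) (dim B * dim A)"
    using free_carrier[of "B @ A"] A B \<mu> by simp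
  with link_rchoi[OF A lin_map_choi_map[where C = "of_nat (dim A) \<cdot>\<^sub>m \<mu>"] free_carrier[OF A \<rho>], of B]
  have "?L \<rho> = of_nat (dim A) \<cdot>\<^sub>m ptrace_snd (dim B) (dim A) (\<mu> * kron (1\<^sub>m (dim B)) (transpose_mat \<rho>))"
    by (simp add: rchoi_choi_map[OF A])
  ultimately show "of_nat (dim A) \<cdot>\<^sub>m ptrace_snd (dim B) (dim A) (\<mu> * kron (1\<^sub>m (dim B)) (transpose_mat \<rho>)) \<in> F B"
    by simp
qed

lemma CD_resource_theory_iff: "CD_resource_theory F \<longleftrightarrow> max_ent_free F \<and> link_closed F"
proof
  assume R: "CD_resource_theory F"
  have "max_ent_free F"
    using R CD_op_free unfolding CD_resource_theory_def max_ent_free_def by (metis rchoi_id)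
  moreover have "link_closed F"
    using R unfolding CD_resource_theory_def by (intro link_closed_if_comp_closed) blast
  ultimately show "max_ent_free F \<and> link_closed F" ..
next
  assume "max_ent_free F \<and> link_closed F"
  then show "CD_resource_theory F"
    unfolding CD_resource_theory_def using CD_op_id CD_op_swap CD_op_discard CD_op_comp CD_op_par by simp
qed

end

theorem theorem1:
  fixes F :: free_states
  assumes "admissible_free_states F"
  shows "CD_resource_theory F \<longleftrightarrow>
    ((\<forall>A. is_sys A \<longrightarrow> (1 / of_nat (dim A)) \<cdot>\<^sub>m Phi (dim A) \<in> F (A @ A)) \<and>
     (\<forall>A B. is_sys A \<longrightarrow> is_sys B \<longrightarrow>
        (\<forall>\<rho>\<in>F A. \<forall>\<mu>\<in>F (B @ A).
           ptrace_fst (dim B) (dim A) \<mu> = (1 / of_nat (dim A)) \<cdot>\<^sub>m 1\<^sub>m (dim A) \<longrightarrow>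
           of_nat (dim A) \<cdot>\<^sub>m
             ptrace_snd (dim B) (dim A) (\<mu> * kron (1\<^sub>m (dim B)) (transpose_mat \<rho>)) \<in> F B)))"
  using CD_resource_theory_iff[OF assms] unfolding max_ent_free_def link_closed_def .

end
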